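(* For every complex $s=\sigma+it$ with $\frac12<\sigma\leq\frac34$, $$|g(s)|<\frac{1.0053}{\sigma-\frac12}.$$
   Context: For $\mathrm{Re}(s)>1/2$ define $g(s)=\sum_{r\ge 2}\sum_{p}\frac{\log p}{p^{rs}}=\sum_p\frac{\log p}{p^s(p^s-1)}$, where $p$ runs over the primes. *)

theory Defs
  imports "HOL-Analysis.Analysis" "HOL-Computational_Algebra.Primes"
begin

definition g :: "complex \<Rightarrow> complex" where
  "g s = (\<Sum>\<^sub>\<infinity>p\<in>{p::nat. prime p}.
            complex_of_real (ln (real p)) / ((of_nat p powr s) * (of_nat p powr s - 1)))"

end

theory Submission
  imports Defs
begin

text \<open>With \<open>\<sigma> = Re s\<close>, the summand of \<open>g s\<close> at \<open>p\<close> has modulus at most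
  \<open>ln p / (p^\<sigma> (p^\<sigma> - 1))\<close>. Summation by parts against Chebyshev's bound
  \<open>\<theta>(n) \<le> (n - 3/2) ln 4\<close>, which comes from \<open>\<Prod>{p \<le> n} p \<le> 4^n / 8\<close>, trades the primes
  \<open>p \<ge> 3\<close> for all integers \<open>k \<ge> 3\<close> with weight \<open>2 ln 2\<close>. Splitting
  \<open>1 / (k^\<sigma> (k^\<sigma> - 1))\<close> into a \<open>k^(-2\<sigma>)\<close> and a \<open>k^(-3\<sigma>)\<close> part and comparing these sums
  with integrals yields an explicit majorant in \<open>\<sigma>\<close> alone. Finally
  \<open>(\<sigma> - 1/2) \<cdot> majorant \<sigma> < 1.0053\<close> is checked on 20 intervals of length \<open>1/80\<close>
  covering \<open>(1/2, 3/4]\<close>, using crude bounds that are monotone in the endpoints.\<close>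

lemma prod_primes_dvd:
  assumes "finite A" "\<And>p. p \<in> A \<Longrightarrow> prime p \<and> p dvd (n::nat)"
  shows "\<Prod>A dvd n"
  using assms
proof (induction A rule: finite_induct)
  case empty then show ?case by simp
next
  case (insert p A)
  have "coprime p (\<Prod>A)"
    using insert by (intro prod_coprime_right) (metis insertCI primes_coprime)
  then show ?case using insert by (simp add: divides_mult)
qed

lemma prod_primes_between_dvd_binomial:
  "\<Prod>{p. prime p \<and> m+1 < p \<and> p \<le> 2*m+1} dvd ((2*m+1) choose m)"
proof (rule prod_primes_dvd)
  fix p assume p: "p \<in> {p. prime p \<and> m+1 < p \<and> p \<le> 2*m+1}"
  have fact_eq: "fact m * fact (m+1) * ((2*m+1) choose m) = (fact (2*m+1) :: nat)"
    using binomial_fact_lemma[of m "2*m+1"] by (simp add: mult_2)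
  have "p dvd fact (2*m+1)" using p by (simp only: prime_dvd_fact_iff mem_Collect_eq)
  then have "p dvd fact m * fact (m+1) * ((2*m+1) choose m)" by (simp only: fact_eq)
  moreover have "\<not> p dvd fact m" using p by (subst prime_dvd_fact_iff) auto
  moreover have "\<not> p dvd fact (m+1)" using p by (subst prime_dvd_fact_iff) auto
  ultimately show "prime p \<and> p dvd ((2*m+1) choose m)" using p by (auto simp: prime_dvd_mult_iff)
qed simp

lemma binomial_odd_middle_le: "(2*m+1) choose m \<le> 4^m"
proof -
  have "(2*m+1) choose m \<le> (\<Sum>k\<le>m. (2*m+1) choose k)"
    by (rule member_le_sum) auto
  also have "\<dots> = 2^(2*m)" by (rule binomial_r_part_sum)
  also have "\<dots> = 4^m" by (simp add: power_mult)
  finally show ?thesis .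
qed

lemma primes_le_even_eq:
  fixes n :: nat
  assumes "even n" "n \<noteq> 2"
  shows "{p. prime p \<and> p \<le> n} = {p. prime p \<and> p \<le> n - 1}"
proof (intro Collect_cong iffI conjI)
  fix p assume p: "prime p \<and> p \<le> n"
  have "p \<noteq> n"
  proof
    assume "p = n"
    then show False using assms p prime_odd_nat[of p] prime_ge_2_nat[of p] by auto
  qed
  with p show "p \<le> n - 1" by arith
qed auto

text \<open>The factor 8, exact for \<open>n = 2\<close>, is the source of the \<open>3/2\<close> in \<open>sum_ln_primes_le\<close>.\<close>
lemma primorial_le_4_pow: "n \<ge> 2 \<Longrightarrow> 8 * \<Prod>{p. prime p \<and> p \<le> n} \<le> (4::nat)^n"
proof (induction n rule: less_induct)
  case (less n)
  consider "n = 2" | "n \<noteq> 2" "even n" | m where "n = 2*m+1" "m \<ge> 1"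
  proof (cases "even n")
    case False
    then obtain m where "n = 2*m+1" by (rule oddE)
    with less.prems show ?thesis using that(3) by (cases "m = 0") auto
  qed (use that in blast)
  then show ?case
  proof cases
    case 1
    then have "{p. prime p \<and> p \<le> n} = {2}" using prime_ge_2_nat by (auto simp: le_antisym)
    then show ?thesis using 1 by simp
  next
    case 2
    then have n4: "n \<ge> 4" using less.prems by presburger
    have "{p. prime p \<and> p \<le> n} = {p. prime p \<and> p \<le> n - 1}"
      using 2 by (intro primes_le_even_eq)
    moreover have "8 * \<Prod>{p. prime p \<and> p \<le> n - 1} \<le> (4::nat)^(n-1)"
      using less.IH[of "n-1"] n4 by simp
    moreover have "(4::nat)^(n-1) \<le> 4^n" by (intro power_increasing) auto
    ultimately show ?thesis by (metis order_trans)
  next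
    case (3 m)
    have split: "{p. prime p \<and> p \<le> n} =
        {p. prime p \<and> p \<le> m+1} \<union> {p. prime p \<and> m+1 < p \<and> p \<le> 2*m+1}"
      using 3 by auto
    have "\<Prod>{p. prime p \<and> p \<le> n} =
        \<Prod>{p. prime p \<and> p \<le> m+1} * \<Prod>{p. prime p \<and> m+1 < p \<and> p \<le> 2*m+1}"
      unfolding split by (rule prod.union_disjoint) auto
    moreover have "8 * \<Prod>{p. prime p \<and> p \<le> m+1} \<le> (4::nat)^(m+1)"
      using less.IH[of "m+1"] 3 by simp
    moreover have "\<Prod>{p. prime p \<and> m+1 < p \<and> p \<le> 2*m+1} \<le> 4^m"
      using dvd_imp_le[OF prod_primes_between_dvd_binomial, of m] binomial_odd_middle_le[of m]
      by simp
    ultimately have "8 * \<Prod>{p. prime p \<and> p \<le> n} \<le> 4^(m+1) * 4^m"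
      by (metis (no_types, lifting) mult.assoc mult_le_mono)
    also have "\<dots> = 4^n" using 3 by (simp add: power_add[symmetric])
    finally show ?thesis .
  qed
qed

lemma sum_ln_primes_le:
  assumes "n \<ge> 2"
  shows "(\<Sum>p | prime p \<and> p \<le> n. ln (real p)) \<le> (real n - 3/2) * ln 4"
proof -
  let ?P = "\<Prod>{p. prime p \<and> p \<le> n}"
  have pos: "real ?P > 0"
    by (simp only: of_nat_prod, intro prod_pos) (auto simp: prime_gt_0_nat)
  have "real (8 * ?P) \<le> real ((4::nat)^n)"
    using primorial_le_4_pow[OF assms] by linarith
  then have le: "real ?P \<le> 4^n / 8" by simp
  have "(\<Sum>p | prime p \<and> p \<le> n. ln (real p)) = ln (real ?P)"
    using ln_prod[of "{p. prime p \<and> p \<le> n}" real] by (simp add: prime_gt_0_nat)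
  also have "\<dots> \<le> ln (4^n / 8)" using pos le by simp
  also have "\<dots> = real n * ln 4 - ln 8" by (simp add: ln_div ln_realpow)
  also have "ln (8::real) = 3/2 * ln 4"
    using ln_realpow[of 2 3] ln_realpow[of 2 2] by simp
  finally show ?thesis by (simp add: algebra_simps)
qed

lemma summation_by_parts_atLeastAtMost:
  fixes a f :: "nat \<Rightarrow> 'a::comm_ring"
  shows "(\<Sum>k=m..M. a k * f k) =
    (\<Sum>k=m..M. (\<Sum>j=m..k. a j) * (f k - f (Suc k))) + (\<Sum>j=m..M. a j) * f (Suc M)"
proof (induction M)
  case (Suc M)
  then show ?case by (cases "Suc M < m") (simp_all add: sum.cl_ivl_Suc algebra_simps)
qed (cases "m = 0"; simp add: algebra_simps)

lemma sum_linear_weights_by_parts: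
  fixes f :: "nat \<Rightarrow> real"
  assumes "M \<ge> 2"
  shows "(\<Sum>k=2..M. (C * real k - D) * (f k - f (Suc k))) + (C * real M - D) * f (Suc M) =
    C * (\<Sum>k=2..M. f k) + (C - D) * f 2"
  using assms
proof (induction M rule: nat_induct_at_least)
  case (Suc M)
  then show ?case by (simp add: sum.cl_ivl_Suc algebra_simps)
qed (simp add: algebra_simps)

lemma sum_by_parts_le_linear:
  fixes a f :: "nat \<Rightarrow> real"
  assumes "M \<ge> 2"
    and partial: "\<And>k. 2 \<le> k \<Longrightarrow> k \<le> M \<Longrightarrow> (\<Sum>j=2..k. a j) \<le> C * real k - D"
    and antimono: "\<And>k. 2 \<le> k \<Longrightarrow> f (Suc k) \<le> f k"
    and nonneg: "\<And>k. 2 \<le> k \<Longrightarrow> 0 \<le> f k"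
  shows "(\<Sum>k=2..M. a k * f k) \<le> C * (\<Sum>k=2..M. f k) + (C - D) * f 2"
proof -
  have "(\<Sum>k=2..M. a k * f k) =
      (\<Sum>k=2..M. (\<Sum>j=2..k. a j) * (f k - f (Suc k))) + (\<Sum>j=2..M. a j) * f (Suc M)"
    by (rule summation_by_parts_atLeastAtMost)
  also have "\<dots> \<le> (\<Sum>k=2..M. (C * real k - D) * (f k - f (Suc k))) + (C * real M - D) * f (Suc M)"
    using assms by (intro add_mono sum_mono mult_right_mono) auto
  also have "\<dots> = C * (\<Sum>k=2..M. f k) + (C - D) * f 2"
    by (rule sum_linear_weights_by_parts[OF assms(1)])
  finally show ?thesis .
qed

lemma powr_neg_le_telescoping:
  fixes k t :: real
  assumes "t > 1" "k > 1"
  shows "k powr (-t) \<le> ((k-1) powr (1-t) - k powr (1-t)) / (t-1)"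
proof -
  have ln_ratio: "ln (k-1) - ln k \<le> -1/k"
  proof -
    have "1 - 1/k = (k-1)/k" using assms by (simp add: field_simps)
    then have "ln (k-1) - ln k = ln (1 - 1/k)" using assms by (simp add: ln_div)
    also have "\<dots> \<le> -1/k" using assms ln_le_minus_one[of "1 - 1/k"] by simp
    finally show ?thesis .
  qed
  have "k powr (1-t) * (1 + (t-1)/k) \<le> k powr (1-t) * exp ((1-t) * (ln (k-1) - ln k))"
  proof (rule mult_left_mono)
    have "(t-1)/k \<le> (1-t) * (ln (k-1) - ln k)"
      using mult_left_mono_neg[OF ln_ratio, of "1-t"] assms by (simp add: field_simps)
    then show "1 + (t-1)/k \<le> exp ((1-t) * (ln (k-1) - ln k))"
      using exp_ge_add_one_self[of "(1-t) * (ln (k-1) - ln k)"] by linarith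
  qed simp
  also have "\<dots> = (k-1) powr (1-t)"
    using assms by (simp add: powr_def exp_add[symmetric] algebra_simps)
  finally have "k powr (1-t) + (t-1) * (k powr (1-t) / k) \<le> (k-1) powr (1-t)"
    by (simp add: algebra_simps)
  moreover have "k powr (1-t) / k = k powr (-t)"
    using assms by (simp add: powr_diff powr_minus_divide)
  ultimately show ?thesis using assms by (simp add: field_simps)
qed

lemma sum_powr_neg_le:
  fixes t :: real
  assumes "t > 1" "m \<ge> 1"
  shows "(\<Sum>k=Suc m..M. real k powr (-t)) \<le> real m powr (1-t) / (t-1)"
proof (cases "M \<ge> m")
  case True
  have "(\<Sum>k=Suc m..M. real k powr (-t)) \<le> (real m powr (1-t) - real M powr (1-t)) / (t-1)"
    using True
  proof (induction M rule: nat_induct_at_least)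
    case (Suc M)
    have "(\<Sum>k=Suc m..Suc M. real k powr (-t)) =
        (\<Sum>k=Suc m..M. real k powr (-t)) + real (Suc M) powr (-t)"
      using Suc by (simp add: sum.cl_ivl_Suc)
    also have "\<dots> \<le> (real m powr (1-t) - real M powr (1-t)) / (t-1) +
        (real M powr (1-t) - real (Suc M) powr (1-t)) / (t-1)"
      using Suc.IH powr_neg_le_telescoping[of t "real (Suc M)"] Suc.hyps assms
      by (intro add_mono) auto
    also have "\<dots> = (real m powr (1-t) - real (Suc M) powr (1-t)) / (t-1)"
      by (simp add: add_divide_distrib[symmetric])
    finally show ?case .
  qed simp
  also have "\<dots> \<le> real m powr (1-t) / (t-1)"
    using assms by (simp add: divide_right_mono)
  finally show ?thesis .
qed (use assms in simp)

text \<open>For \<open>\<sigma> > 0\<close> this is \<open>\<Sum>r\<ge>2. k^(-r\<sigma>)\<close>, the real counterpart of the inner sum in \<open>g\<close>.\<close>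
definition tail_weight :: "real \<Rightarrow> nat \<Rightarrow> real" where
  "tail_weight \<sigma> k = 1 / (real k powr \<sigma> * (real k powr \<sigma> - 1))"

lemma tail_weight_nonneg: "\<sigma> > 0 \<Longrightarrow> k \<ge> 2 \<Longrightarrow> 0 \<le> tail_weight \<sigma> k"
  unfolding tail_weight_def by (simp add: gr_one_powr less_imp_le)

lemma tail_weight_Suc_le:
  assumes "\<sigma> > 0" "k \<ge> 2"
  shows "tail_weight \<sigma> (Suc k) \<le> tail_weight \<sigma> k"
proof -
  have gt1: "real k powr \<sigma> > 1" using assms by (intro gr_one_powr) auto
  have le: "real k powr \<sigma> \<le> real (Suc k) powr \<sigma>" using assms by (intro powr_mono2) auto
  have "real k powr \<sigma> * (real k powr \<sigma> - 1) \<le> real (Suc k) powr \<sigma> * (real (Suc k) powr \<sigma> - 1)"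
    using gt1 le by (intro mult_mono) auto
  moreover have "0 < real k powr \<sigma> * (real k powr \<sigma> - 1)" using gt1 by (intro mult_pos_pos) linarith+
  ultimately show ?thesis unfolding tail_weight_def by (intro divide_left_mono) auto
qed

lemma tail_weight_le_split:
  assumes "\<sigma> > 0" "k \<ge> 3"
  shows "tail_weight \<sigma> k \<le> real k powr (-(2*\<sigma>)) + real k powr (-(3*\<sigma>)) / (1 - 3 powr (-\<sigma>))"
proof -
  define x where "x = real k powr \<sigma>"
  define y where "y = (3::real) powr \<sigma>"
  have y1: "y > 1" unfolding y_def using assms by (intro gr_one_powr) auto
  have yx: "y \<le> x" unfolding x_def y_def using assms by (intro powr_mono2) auto
  have x1: "x > 1" using yx y1 by linarith
  have "real k powr (-(2*\<sigma>)) = 1/(x*x)" "real k powr (-(3*\<sigma>)) = 1/(x*x*x)"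
    "(3::real) powr (-\<sigma>) = 1/y"
    unfolding x_def y_def by (simp_all add: powr_minus_divide powr_add[symmetric] algebra_simps)
  moreover have "tail_weight \<sigma> k = 1/(x*x) + (1/(x*x*x)) / (1 - 1/x)"
    unfolding tail_weight_def x_def[symmetric] using x1 by (simp add: field_simps)
  moreover have "(1/(x*x*x)) / (1 - 1/x) \<le> (1/(x*x*x)) / (1 - 1/y)"
    using x1 y1 yx by (intro divide_left_mono) (auto simp: frac_le)
  ultimately show ?thesis by simp
qed

lemma sum_tail_weight_le:
  assumes "\<sigma> > 1/2"
  shows "(\<Sum>k=3..M. tail_weight \<sigma> k) \<le>
    2 powr (1-2*\<sigma>) / (2*\<sigma>-1) + 2 powr (1-3*\<sigma>) / (3*\<sigma>-1) / (1 - 3 powr (-\<sigma>))"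
proof -
  have "(3::real) powr (-\<sigma>) < 3 powr 0" using assms by (intro powr_less_mono) auto
  then have den: "1 - 3 powr (-\<sigma>) > 0" by simp
  have "(\<Sum>k=3..M. tail_weight \<sigma> k) \<le>
      (\<Sum>k=3..M. real k powr (-(2*\<sigma>)) + real k powr (-(3*\<sigma>)) / (1 - 3 powr (-\<sigma>)))"
    using assms by (intro sum_mono tail_weight_le_split) auto
  also have "\<dots> =
      (\<Sum>k=3..M. real k powr (-(2*\<sigma>))) + (\<Sum>k=3..M. real k powr (-(3*\<sigma>))) / (1 - 3 powr (-\<sigma>))"
    by (simp add: sum.distrib sum_divide_distrib)
  also have "\<dots> \<le> 2 powr (1-2*\<sigma>) / (2*\<sigma>-1) + 2 powr (1-3*\<sigma>) / (3*\<sigma>-1) / (1 - 3 powr (-\<sigma>))"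
    using assms den sum_powr_neg_le[of "2*\<sigma>" 2 M] sum_powr_neg_le[of "3*\<sigma>" 2 M]
    by (intro add_mono divide_right_mono) (simp_all add: numeral_3_eq_3)
  finally show ?thesis .
qed

definition majorant :: "real \<Rightarrow> real" where
  "majorant \<sigma> = ln 2 * tail_weight \<sigma> 2 +
     2 * ln 2 * (2 powr (1-2*\<sigma>) / (2*\<sigma>-1) + 2 powr (1-3*\<sigma>) / (3*\<sigma>-1) / (1 - 3 powr (-\<sigma>)))"

lemma sum_primes_le_eq_sum_atLeastAtMost:
  fixes M :: nat
  shows "(\<Sum>p | prime p \<and> p \<le> M. h p) = (\<Sum>k=2..M. if prime k then h k else 0)"
proof -
  have "{p. prime p \<and> p \<le> M} = {k \<in> {2..M}. prime k}" using prime_ge_2_nat by auto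
  then show ?thesis by (simp only: sum.inter_filter[OF finite_atLeastAtMost])
qed

lemma sum_primes_tail_weight_le_majorant:
  assumes "\<sigma> > 1/2" "M \<ge> 2"
  shows "(\<Sum>p | prime p \<and> p \<le> M. ln (real p) * tail_weight \<sigma> p) \<le> majorant \<sigma>"
proof -
  define a where "a k = (if prime k then ln (real k) else 0)" for k
  have ln4: "ln (4::real) = 2 * ln 2" using ln_realpow[of 2 2] by simp
  have "(\<Sum>p | prime p \<and> p \<le> M. ln (real p) * tail_weight \<sigma> p) =
      (\<Sum>k=2..M. a k * tail_weight \<sigma> k)"
    unfolding sum_primes_le_eq_sum_atLeastAtMost a_def by (intro sum.cong) auto
  also have "\<dots> \<le> ln 4 * (\<Sum>k=2..M. tail_weight \<sigma> k) + (ln 4 - 3/2 * ln 4) * tail_weight \<sigma> 2"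
  proof (rule sum_by_parts_le_linear[OF assms(2)])
    fix k assume "2 \<le> k" "k \<le> M"
    then show "(\<Sum>j=2..k. a j) \<le> ln 4 * real k - 3/2 * ln 4"
      using sum_ln_primes_le[of k] unfolding a_def sum_primes_le_eq_sum_atLeastAtMost
      by (simp add: algebra_simps)
  qed (use assms in \<open>auto intro: tail_weight_Suc_le tail_weight_nonneg\<close>)
  also have "(\<Sum>k=2..M. tail_weight \<sigma> k) = tail_weight \<sigma> 2 + (\<Sum>k=3..M. tail_weight \<sigma> k)"
    using assms by (subst sum.atLeast_Suc_atMost) auto
  also have "ln 4 * \<dots> + (ln 4 - 3/2 * ln 4) * tail_weight \<sigma> 2 =
      ln 2 * tail_weight \<sigma> 2 + 2 * ln 2 * (\<Sum>k=3..M. tail_weight \<sigma> k)"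
    by (simp add: ln4 algebra_simps)
  also have "\<dots> \<le> majorant \<sigma>"
    unfolding majorant_def using assms
    by (intro add_left_mono mult_left_mono sum_tail_weight_le) auto
  finally show ?thesis .
qed

lemma ln2_less_7_10: "ln (2::real) < 7/10"
proof -
  have "(2::real) < (1 + (7/10) / real (50::nat)) ^ 50" by (simp add: power_divide)
  also have "\<dots> \<le> exp (7/10)" by (rule exp_ge_one_plus_x_over_n_power_n) auto
  finally show ?thesis by (metis exp_less_cancel_iff exp_ln zero_less_numeral)
qed

lemma powr_ge_one_plus_two_thirds:
  fixes c d :: real
  assumes "c \<ge> 2" "d \<ge> 0"
  shows "1 + 2/3 * d \<le> c powr d"
proof -
  have "ln 2 \<le> ln c" using assms(1) by simp
  then have "2/3 \<le> ln c" using ln2_ge_two_thirds by linarith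
  then have "1 + 2/3 * d \<le> 1 + d * ln c" using assms(2) mult_left_mono[of "2/3" "ln c" d] by simp
  also have "\<dots> \<le> exp (d * ln c)" by (rule exp_ge_add_one_self)
  also have "\<dots> = c powr d" using assms(1) by (simp add: powr_def mult.commute)
  finally show ?thesis .
qed

lemma scaled_majorant_eq:
  assumes "\<sigma> > 1/2" and d: "d = \<sigma> - 1/2" and x: "x = 2 powr \<sigma>" and y: "y = 3 powr \<sigma>"
  shows "(\<sigma> - 1/2) * majorant \<sigma> =
    d * ln 2 / (x*(x-1)) + 2 * ln 2 / x^2 + 4 * ln 2 * d / (x^3 * (1/2 + 3*d) * (1 - 1/y))"
proof -
  have x2: "2 powr (1-2*\<sigma>) = 2 / x^2" and x3: "2 powr (1-3*\<sigma>) = 2 / x^3"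
    unfolding x by (simp_all add: powr_diff powr_add[symmetric] power2_eq_square power3_eq_cube
        algebra_simps)
  have y1: "(3::real) powr (-\<sigma>) = 1/y" unfolding y by (simp add: powr_minus_divide)
  have tw: "tail_weight \<sigma> 2 = 1 / (x*(x-1))" unfolding tail_weight_def x by simp
  have "x > 1" "y > 1" unfolding x y using assms(1) by (simp_all add: gr_one_powr)
  moreover have "d > 0" "\<sigma> = 1/2 + d" using assms(1) d by simp_all
  ultimately have "(\<sigma> - 1/2) * (ln 2 / (x*(x-1)) +
      2 * ln 2 * (2 / x^2 / (2*\<sigma>-1) + 2 / x^3 / (3*\<sigma>-1) / (1 - 1/y))) =
    d * ln 2 / (x*(x-1)) + 2 * ln 2 / x^2 + 4 * ln 2 * d / (x^3 * (1/2 + 3*d) * (1 - 1/y))"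
    by (simp only:) (simp add: field_simps)
  then show ?thesis unfolding majorant_def x2 x3 y1 tw by simp
qed

text \<open>Upper bound for the right-hand side of \<open>scaled_majorant_eq\<close> when \<open>a \<le> \<sigma> - 1/2 \<le> b\<close>,
  from \<open>ln 2 < 7/10\<close>, \<open>2^\<sigma> \<ge> 1.4142 e\<close>, \<open>3^\<sigma> \<ge> 1.732 e\<close> and \<open>4^(\<sigma> - 1/2) \<ge> e^2\<close>,
  where \<open>e = 1 + 2a/3\<close>.\<close>
definition interval_estimate :: "real \<Rightarrow> real \<Rightarrow> real" where
  "interval_estimate a b = (let e = 1 + 2/3*a; x = 14142/10000*e; y = 1732/1000*e in
     b * (7/10) / (x*(x-1)) + (7/10) / e^2 + (14/5) * b / (x^3 * (1/2 + 3*a) * (1 - 1/y)))"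

lemma interval_estimate_ge:
  fixes a b d e x y L :: real
  assumes a: "0 \<le> a" "a \<le> d" "d \<le> b" and L: "0 < L" "L \<le> 7/10" and e: "e = 1 + 2/3*a"
    and x: "14142/10000 * e \<le> x" "2 * e^2 \<le> x^2" and y: "1732/1000 * e \<le> y"
  shows "d * L / (x*(x-1)) + 2 * L / x^2 + 4 * L * d / (x^3 * (1/2 + 3*d) * (1 - 1/y)) \<le>
    interval_estimate a b"
proof -
  define xe where "xe = 14142/10000 * e"
  define ye where "ye = 1732/1000 * e"
  have e1: "e \<ge> 1" using a e by simp
  have xe1: "xe > 1" and ye1: "ye > 1" unfolding xe_def ye_def using e1 by simp_all
  have "xe \<le> x" "ye \<le> y" using x y unfolding xe_def ye_def by simp_all
  have term1: "d * L / (x*(x-1)) \<le> b * (7/10) / (xe*(xe-1))"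
    using a L xe1 \<open>xe \<le> x\<close> by (intro frac_le mult_mono) auto
  have "2 * L / x^2 \<le> 2 * (7/10) / (2 * e^2)"
    using L e1 x(2) by (intro frac_le) auto
  then have term2: "2 * L / x^2 \<le> (7/10) / e^2" by simp
  have "1 - 1/ye \<le> 1 - 1/y" using ye1 \<open>ye \<le> y\<close> by (simp add: frac_le)
  moreover have "xe^3 \<le> x^3" using xe1 \<open>xe \<le> x\<close> by (intro power_mono) auto
  moreover have "0 < 1 - 1/ye" using ye1 by simp
  ultimately have den: "xe^3 * (1/2 + 3*a) * (1 - 1/ye) \<le> x^3 * (1/2 + 3*d) * (1 - 1/y)"
    using a xe1 \<open>xe \<le> x\<close> by (intro mult_mono) (auto simp: zero_le_mult_iff)
  have term3: "4 * L * d / (x^3 * (1/2 + 3*d) * (1 - 1/y)) \<le>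
      (14/5) * b / (xe^3 * (1/2 + 3*a) * (1 - 1/ye))"
  proof (rule frac_le)
    show "4 * L * d \<le> 14/5 * b" using a L by (intro mult_mono) auto
    show "0 < xe^3 * (1/2 + 3*a) * (1 - 1/ye)" using a xe1 \<open>0 < 1 - 1/ye\<close> by simp
  qed (use a den in auto)
  show ?thesis
    using term1 term2 term3 unfolding interval_estimate_def Let_def xe_def ye_def e[symmetric]
    by linarith
qed

lemma scaled_majorant_le_interval_estimate:
  assumes "1/2 < \<sigma>" "0 \<le> a" "a \<le> \<sigma> - 1/2" "\<sigma> - 1/2 \<le> b"
  shows "(\<sigma> - 1/2) * majorant \<sigma> \<le> interval_estimate a b"
proof -
  define d where "d = \<sigma> - 1/2"
  define e where "e = 1 + 2/3*a"
  have d0: "d \<ge> 0" "a \<le> d" using assms unfolding d_def by simp_all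
  have "e \<le> 1 + 2/3 * d" unfolding e_def using d0 by simp
  then have two: "e \<le> 2 powr d" and three: "e \<le> 3 powr d"
    using powr_ge_one_plus_two_thirds[of 2 d] powr_ge_one_plus_two_thirds[of 3 d] d0 by simp_all
  have sigma: "\<sigma> = 1/2 + d" unfolding d_def by simp
  have x: "2 powr \<sigma> = sqrt 2 * 2 powr d" and y: "3 powr \<sigma> = sqrt 3 * 3 powr d"
    unfolding sigma by (simp_all add: powr_add powr_half_sqrt)
  have "sqrt 2 \<ge> 14142/10000" "sqrt 3 \<ge> 1732/1000"
    by (rule real_le_rsqrt, simp add: power2_eq_square)+
  moreover have "e \<ge> 1" using assms(2) unfolding e_def by simp
  ultimately have xe: "14142/10000 * e \<le> 2 powr \<sigma>" and ye: "1732/1000 * e \<le> 3 powr \<sigma>"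
    unfolding x y using two three by (intro mult_mono; simp)+
  have xsq: "2 * e^2 \<le> (2 powr \<sigma>)^2"
    unfolding x using two \<open>e \<ge> 1\<close> by (simp add: power_mult_distrib power_mono)
  have "d \<le> b" using assms(4) unfolding d_def .
  have "(\<sigma> - 1/2) * majorant \<sigma> = d * ln 2 / (2 powr \<sigma> * (2 powr \<sigma> - 1)) + 2 * ln 2 / (2 powr \<sigma>)^2
      + 4 * ln 2 * d / ((2 powr \<sigma>)^3 * (1/2 + 3*d) * (1 - 1 / 3 powr \<sigma>))"
    by (rule scaled_majorant_eq[OF assms(1) d_def refl refl])
  also have "\<dots> \<le> interval_estimate a b"
    using ln2_less_7_10 by (intro interval_estimate_ge[OF assms(2) d0(2) \<open>d \<le> b\<close> _ _ e_def xe xsq ye])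
      auto
  finally show ?thesis .
qed

lemma interval_estimate_grid:
  assumes "i \<le> (19::nat)"
  shows "interval_estimate (real i / 80) ((real i + 1) / 80) < 1.0053"
proof -
  have "i = 0 \<or> i = 1 \<or> i = 2 \<or> i = 3 \<or> i = 4 \<or> i = 5 \<or> i = 6 \<or> i = 7 \<or> i = 8 \<or> i = 9 \<or>
        i = 10 \<or> i = 11 \<or> i = 12 \<or> i = 13 \<or> i = 14 \<or> i = 15 \<or> i = 16 \<or> i = 17 \<or> i = 18 \<or> i = 19"
    using assms by arith
  then show ?thesis
    by (elim disjE) (simp_all add: interval_estimate_def Let_def power_divide field_simps)
qed

lemma scaled_majorant_less:
  assumes "1/2 < \<sigma>" "\<sigma> \<le> 3/4"
  shows "(\<sigma> - 1/2) * majorant \<sigma> < 1.0053"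
proof -
  define d where "d = \<sigma> - 1/2"
  define i where "i = min 19 (nat \<lfloor>80*d\<rfloor>)" \<comment> \<open>the \<open>min\<close> only matters at \<open>\<sigma> = 3/4\<close>\<close>
  have d: "0 < d" "d \<le> 1/4" using assms unfolding d_def by simp_all
  have "0 \<le> \<lfloor>80*d\<rfloor>" using d by simp
  then have "real i \<le> of_int \<lfloor>80*d\<rfloor>" unfolding i_def by linarith
  then have "real i \<le> 80*d" using of_int_floor_le[of "80*d"] by linarith
  then have lower: "real i / 80 \<le> \<sigma> - 1/2" unfolding d_def by simp
  have "80*d \<le> real i + 1"
  proof (cases "nat \<lfloor>80*d\<rfloor> \<le> 19")
    case True
    then have "real i = of_int \<lfloor>80*d\<rfloor>" unfolding i_def using d by simp
    then show ?thesis by linarith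
  next
    case False
    then show ?thesis unfolding i_def using d by simp
  qed
  then have upper: "\<sigma> - 1/2 \<le> (real i + 1) / 80" unfolding d_def by simp
  have "(\<sigma> - 1/2) * majorant \<sigma> \<le> interval_estimate (real i / 80) ((real i + 1) / 80)"
    using assms(1) lower upper by (intro scaled_majorant_le_interval_estimate) auto
  also have "\<dots> < 1.0053" by (rule interval_estimate_grid) (simp add: i_def)
  finally show ?thesis .
qed

lemma norm_infsum_le_of_finite_sums:
  fixes f :: "'a \<Rightarrow> 'b::real_normed_vector"
  assumes "\<And>F. finite F \<Longrightarrow> F \<subseteq> A \<Longrightarrow> (\<Sum>x\<in>F. norm (f x)) \<le> B"
  shows "norm (infsum f A) \<le> B"
proof -
  have summable: "(\<lambda>x. norm (f x)) summable_on A"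
    by (rule nonneg_bdd_above_summable_on) (auto intro!: bdd_aboveI2 assms)
  have "norm (infsum f A) \<le> infsum (\<lambda>x. norm (f x)) A" by (rule norm_infsum_bound[OF summable])
  also have "\<dots> \<le> B" by (rule infsum_le_finite_sums[OF summable assms])
  finally show ?thesis .
qed

lemma norm_ln_div_powr_le_tail_weight:
  assumes "n \<ge> 2" "Re s > 0"
  shows "cmod (of_real (ln (real n)) / (of_nat n powr s * (of_nat n powr s - 1)))
    \<le> ln (real n) * tail_weight (Re s) n"
proof -
  define X where "X = real n powr Re s"
  have X1: "X > 1" unfolding X_def using assms by (intro gr_one_powr) auto
  have norm_powr: "cmod (of_nat n powr s) = X"
    using norm_powr_real_powr[of "of_nat n" s] unfolding X_def by simp
  then have "cmod (of_nat n powr s - 1) \<ge> X - 1"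
    using norm_triangle_ineq2[of "of_nat n powr s" 1] by simp
  moreover have ln0: "ln (real n) \<ge> 0" using assms by simp
  ultimately have "ln (real n) / (X * cmod (of_nat n powr s - 1)) \<le> ln (real n) / (X * (X - 1))"
    using X1 by (intro divide_left_mono mult_left_mono mult_pos_pos) auto
  then show ?thesis
    using ln0 norm_powr unfolding tail_weight_def X_def by (simp add: norm_divide norm_mult)
qed

lemma norm_g_le_majorant:
  assumes "1/2 < Re s"
  shows "cmod (g s) \<le> majorant (Re s)"
  unfolding g_def
proof (rule norm_infsum_le_of_finite_sums)
  fix F :: "nat set" assume F: "finite F" "F \<subseteq> {p. prime p}"
  define M where "M = Max (insert 2 F)"
  have M: "M \<ge> 2" and sub: "F \<subseteq> {p. prime p \<and> p \<le> M}" unfolding M_def using F by auto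
  have primes_ge2: "\<And>p::nat. prime p \<Longrightarrow> p \<ge> 2" by (rule prime_ge_2_nat)
  have "(\<Sum>p\<in>F. cmod (complex_of_real (ln (real p)) / (of_nat p powr s * (of_nat p powr s - 1))))
      \<le> (\<Sum>p\<in>F. ln (real p) * tail_weight (Re s) p)"
    using F assms primes_ge2 by (intro sum_mono norm_ln_div_powr_le_tail_weight) auto
  also have "\<dots> \<le> (\<Sum>p | prime p \<and> p \<le> M. ln (real p) * tail_weight (Re s) p)"
    using sub assms primes_ge2
    by (intro sum_mono2) (auto intro!: mult_nonneg_nonneg tail_weight_nonneg ln_ge_zero
        simp: Suc_le_eq prime_gt_0_nat)
  also have "\<dots> \<le> majorant (Re s)"
    using assms M by (rule sum_primes_tail_weight_le_majorant)
  finally show "(\<Sum>p\<in>F. cmod (complex_of_real (ln (real p)) /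
      (of_nat p powr s * (of_nat p powr s - 1)))) \<le> majorant (Re s)" .
qed

theorem mainTheorem7:
  fixes s :: complex
  assumes "1/2 < Re s" and "Re s \<le> 3/4"
  shows "cmod (g s) < 1.0053 / (Re s - 1/2)"
proof -
  have "(Re s - 1/2) * cmod (g s) \<le> (Re s - 1/2) * majorant (Re s)"
    using assms(1) norm_g_le_majorant[OF assms(1)] by (intro mult_left_mono) auto
  also have "\<dots> < 1.0053" using scaled_majorant_less[OF assms] .
  finally have "cmod (g s) * (Re s - 1/2) < 1.0053" by (simp only: mult.commute)
  then show ?thesis using assms(1) by (subst pos_less_divide_eq) auto
qed

end
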